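(* Let $\mathcal X=\{1,\ldots,n\}$, $N\ge1$, and let $M=[m_{ij}]$ be an $n\times n$ matrix with nonnegative entries such that all entries of $M^N$ are positive. Let $\lambda_M>0$ be the spectral radius of $M$ (its Perron eigenvalue), and let $\phi,\hat\phi$ be right and left eigenvectors of $M$ for $\lambda_M$ with strictly positive entries ($M\phi=\lambda_M\phi$, $M^T\hat\phi=\lambda_M\hat\phi$), normalized so that $\sum_{x\in\mathcal X}\phi(x)\hat\phi(x)=1$. Define the probability distribution $\bar\nu(x)=\phi(x)\hat\phi(x)$. Let $\mu_0$ be a measure on $\mathcal X$ with $\mu_0(x)>0$ for all $x$, and let $\mathfrak M$ be the measure on $\mathcal X^{N+1}$ given by $\mathfrak M(x_0,\ldots,x_N)=\mu_0(x_0)m_{x_0x_1}\cdots m_{x_{N-1}x_N}$. Then the solution $\mathfrak M^*[\bar\nu,\bar\nu]$ of the problem of minimizing $\mathbb D(P\|\mathfrak M)$ over all probability distributions $P$ on $\mathcal X^{N+1}$ whose marginals at times $0$ and $N$ both equal $\bar\nu$ is a Markov measure with the time-invariant transition matrix $$\bar\Pi=\lambda_M^{-1}\operatorname{diag}(\phi)^{-1}M\operatorname{diag}(\phi),$$ and $\bar\nu$ is an invariant measure of $\bar\Pi$, i.e. $\bar\Pi^T\bar\nu=\bar\nu$.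
   Context: Relative entropy of a probability distribution $P$ with respect to a nonnegative measure $Q$ on a finite set: $\mathbb D(P\|Q)=\sum_x P(x)\log\frac{P(x)}{Q(x)}$ if $\mathrm{supp}(P)\subseteq\mathrm{supp}(Q)$ (with $0\log0=0$), and $+\infty$ otherwise. *)

theory Defs
  imports "HOL-Analysis.Analysis"
begin

(* State space X = a finite type 'a (|X| = n = CARD('a)); matrices X x X are functions 'a => 'a => real. *)

definition matmul :: "('a::finite \<Rightarrow> 'a \<Rightarrow> real) \<Rightarrow> ('a \<Rightarrow> 'a \<Rightarrow> real) \<Rightarrow> 'a \<Rightarrow> 'a \<Rightarrow> real" where
  "matmul A B = (\<lambda>x z. \<Sum>y\<in>UNIV. A x y * B y z)"

fun matpow :: "('a::finite \<Rightarrow> 'a \<Rightarrow> real) \<Rightarrow> nat \<Rightarrow> 'a \<Rightarrow> 'a \<Rightarrow> real" where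
  "matpow A 0 = (\<lambda>x y. if x = y then 1 else 0)"
| "matpow A (Suc k) = matmul (matpow A k) A"

definition spectral_radius :: "('a::finite \<Rightarrow> 'a \<Rightarrow> real) \<Rightarrow> real" where
  "spectral_radius M = Sup {cmod c | c. \<exists>v :: 'a \<Rightarrow> complex. v \<noteq> (\<lambda>_. 0) \<and>
      (\<forall>x. (\<Sum>y\<in>UNIV. complex_of_real (M x y) * v y) = c * v x)}"

definition rel_entropy :: "'b set \<Rightarrow> ('b \<Rightarrow> real) \<Rightarrow> ('b \<Rightarrow> real) \<Rightarrow> ereal" where
  "rel_entropy S P Q =
     (if \<forall>x\<in>S. P x \<noteq> 0 \<longrightarrow> Q x \<noteq> 0
      then ereal (\<Sum>x\<in>S. if P x = 0 then 0 else P x * ln (P x / Q x))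
      else \<infinity>)"

definition paths :: "nat \<Rightarrow> 'a list set" where
  "paths N = {xs. length xs = Suc N}"

definition is_prob_on :: "'b set \<Rightarrow> ('b \<Rightarrow> real) \<Rightarrow> bool" where
  "is_prob_on S P \<longleftrightarrow> (\<forall>x\<in>S. P x \<ge> 0) \<and> (\<Sum>x\<in>S. P x) = 1"

definition marginal :: "nat \<Rightarrow> ('a list \<Rightarrow> real) \<Rightarrow> nat \<Rightarrow> 'a \<Rightarrow> real" where
  "marginal N P t x = (\<Sum>xs\<in>paths N. if xs ! t = x then P xs else 0)"

definition bridge_feasible :: "nat \<Rightarrow> ('a \<Rightarrow> real) \<Rightarrow> ('a \<Rightarrow> real) \<Rightarrow> ('a list \<Rightarrow> real) \<Rightarrow> bool" where
  "bridge_feasible N nu0 nu1 P \<longleftrightarrow> is_prob_on (paths N) P \<and>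
      (\<forall>x. marginal N P 0 x = nu0 x) \<and> (\<forall>x. marginal N P N x = nu1 x)"

definition path_measure :: "('a \<Rightarrow> real) \<Rightarrow> ('a \<Rightarrow> 'a \<Rightarrow> real) \<Rightarrow> nat \<Rightarrow> 'a list \<Rightarrow> real" where
  "path_measure mu0 T N xs = mu0 (xs ! 0) * (\<Prod>k<N. T (xs ! k) (xs ! Suc k))"

end

theory Submission
  imports Defs
begin

text \<open>
  Writing \<open>Pibar x y = M x y * phi y / (lam * phi x)\<close>, the factors \<open>phi\<close> and \<open>lam\<close> telescope
  along a path, so the stationary Markov measure of \<open>Pibar\<close> started in \<open>nubar\<close> has density
  \<open>f x\<^sub>0 * g x\<^sub>N\<close> with respect to the reference path measure \<open>R\<close>, with \<open>f = phihat / (lam^N mu0)\<close>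
  and \<open>g = phi\<close>. It is feasible because \<open>nubar\<close> is \<open>Pibar\<close>-invariant. For a measure \<open>Q\<close> with
  such an endpoint density, \<open>D(P\<parallel>R) = D(P\<parallel>Q) + E\<^sub>P[ln f(x\<^sub>0) + ln g(x\<^sub>N)]\<close>, and the
  expectation depends only on the two marginals of \<open>P\<close>, which are prescribed. Gibbs' inequality
  \<open>D(P\<parallel>Q) \<ge> 0\<close>, with equality only for \<open>P = Q\<close>, then gives minimality and uniqueness.
\<close>

lemma finite_paths: "finite (paths n :: 'a::finite list set)"
  using finite_lists_length_eq[of "UNIV :: 'a set" "Suc n"] by (simp add: paths_def)

lemma sum_paths_0: "(\<Sum>xs\<in>paths 0. F xs) = (\<Sum>x\<in>(UNIV :: 'a::finite set). F [x])"
proof -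
  have "paths 0 = (\<lambda>x. [x]) ` (UNIV :: 'a set)"
    by (auto simp: paths_def length_Suc_conv)
  then show ?thesis
    by (simp add: sum.reindex inj_def)
qed

lemma sum_paths_Suc:
  fixes F :: "'a::finite list \<Rightarrow> 'b::comm_monoid_add"
  shows "(\<Sum>zs\<in>paths (Suc n). F zs) = (\<Sum>xs\<in>paths n. \<Sum>y\<in>UNIV. F (xs @ [y]))"
proof -
  have paths_Suc: "paths (Suc n) = (\<lambda>(xs, y). xs @ [y]) ` (paths n \<times> (UNIV :: 'a set))"
  proof (intro equalityI subsetI)
    fix zs :: "'a list" assume zs: "zs \<in> paths (Suc n)"
    then have "zs = butlast zs @ [last zs]" and "butlast zs \<in> paths n"
      by (cases zs rule: rev_cases; simp add: paths_def)+
    then show "zs \<in> (\<lambda>(xs, y). xs @ [y]) ` (paths n \<times> UNIV)"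
      by (intro image_eqI[where x = "(butlast zs, last zs)"]) auto
  qed (auto simp: paths_def)
  have "inj_on (\<lambda>(xs, y). xs @ [y]) (paths n \<times> (UNIV :: 'a set))"
    by (auto simp: inj_on_def)
  then show ?thesis
    unfolding paths_Suc by (simp add: sum.reindex comp_def sum.cartesian_product case_prod_unfold)
qed

lemma path_measure_nonneg:
  assumes "\<forall>x. a x \<ge> 0" and "\<forall>x y. T x y \<ge> 0"
  shows "path_measure a T n xs \<ge> 0"
  using assms by (simp add: path_measure_def prod_nonneg)

lemma path_measure_snoc:
  assumes "length xs = Suc n"
  shows "path_measure a T (Suc n) (xs @ [y]) = path_measure a T n xs * T (xs ! n) y"
proof -
  have "(\<Prod>k<n. T ((xs @ [y]) ! k) ((xs @ [y]) ! Suc k)) = (\<Prod>k<n. T (xs ! k) (xs ! Suc k))"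
    using assms by (intro prod.cong) (auto simp: nth_append)
  then show ?thesis
    using assms by (simp add: path_measure_def nth_append)
qed

lemma sum_paths_path_measure:
  fixes T :: "'a::finite \<Rightarrow> 'a \<Rightarrow> real"
  shows "(\<Sum>xs\<in>paths n. path_measure a T n xs * b (xs ! n))
       = (\<Sum>x\<in>UNIV. \<Sum>y\<in>UNIV. a x * matpow T n x y * b y)"
proof (induction n arbitrary: b)
  case 0
  then show ?case
    by (simp add: sum_paths_0 path_measure_def if_distrib if_distribR cong: if_cong)
next
  case (Suc n)
  have "(\<Sum>xs\<in>paths (Suc n). path_measure a T (Suc n) xs * b (xs ! Suc n))
      = (\<Sum>xs\<in>paths n. path_measure a T n xs * (\<Sum>y\<in>UNIV. T (xs ! n) y * b y))"
    unfolding sum_paths_Suc sum_distrib_left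
    by (intro sum.cong refl) (simp add: paths_def path_measure_snoc nth_append mult.assoc)
  also have "\<dots> = (\<Sum>x\<in>UNIV. \<Sum>z\<in>UNIV. a x * matpow T n x z * (\<Sum>y\<in>UNIV. T z y * b y))"
    by (rule Suc)
  also have "\<dots> = (\<Sum>x\<in>UNIV. \<Sum>z\<in>UNIV. \<Sum>y\<in>UNIV. a x * matpow T n x z * T z y * b y)"
    by (simp add: sum_distrib_left mult.assoc)
  also have "\<dots> = (\<Sum>x\<in>UNIV. \<Sum>y\<in>UNIV. \<Sum>z\<in>UNIV. a x * matpow T n x z * T z y * b y)"
    by (intro sum.cong refl sum.swap)
  also have "\<dots> = (\<Sum>x\<in>UNIV. \<Sum>y\<in>UNIV. a x * matpow T (Suc n) x y * b y)"
    by (simp add: matmul_def sum_distrib_left sum_distrib_right mult.assoc)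
  finally show ?case .
qed

lemma matpow_row_sum:
  assumes "\<forall>x. (\<Sum>y\<in>UNIV. T x y) = 1"
  shows "(\<Sum>y\<in>UNIV. matpow T n x y) = 1"
proof (induction n arbitrary: x)
  case (Suc n)
  have "(\<Sum>y\<in>UNIV. matpow T (Suc n) x y) = (\<Sum>z\<in>UNIV. matpow T n x z * (\<Sum>y\<in>UNIV. T z y))"
    by (simp add: matmul_def sum_distrib_left) (rule sum.swap)
  then show ?case
    using assms Suc by simp
qed simp

lemma matpow_invariant:
  assumes "\<forall>y. (\<Sum>x\<in>UNIV. nu x * T x y) = nu y"
  shows "(\<Sum>x\<in>UNIV. nu x * matpow T n x y) = nu y"
proof (induction n arbitrary: y)
  case (Suc n)
  have "(\<Sum>x\<in>UNIV. nu x * matpow T (Suc n) x y) = (\<Sum>z\<in>UNIV. (\<Sum>x\<in>UNIV. nu x * matpow T n x z) * T z y)"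
    by (simp add: matmul_def sum_distrib_left sum_distrib_right mult.assoc) (rule sum.swap)
  then show ?case
    using assms Suc by simp
qed (simp add: if_distrib cong: if_cong)

lemma marginal_path_measure:
  fixes T :: "'a::finite \<Rightarrow> 'a \<Rightarrow> real"
  shows "marginal n (path_measure a T n) n y = (\<Sum>x\<in>UNIV. a x * matpow T n x y)"
  using sum_paths_path_measure[where b = "\<lambda>z. if z = y then 1 else 0"]
  by (simp add: marginal_def if_distrib if_distribR cong: if_cong)

lemma sum_path_measure_stochastic:
  fixes T :: "'a::finite \<Rightarrow> 'a \<Rightarrow> real"
  assumes "\<forall>x. (\<Sum>y\<in>UNIV. T x y) = 1"
  shows "(\<Sum>xs\<in>paths n. path_measure a T n xs) = (\<Sum>x\<in>UNIV. a x)"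
proof -
  have "(\<Sum>xs\<in>paths n. path_measure a T n xs) = (\<Sum>x\<in>UNIV. a x * (\<Sum>y\<in>UNIV. matpow T n x y))"
    using sum_paths_path_measure[where b = "\<lambda>_. 1" and a = a and T = T] by (simp add: sum_distrib_left)
  then show ?thesis
    using matpow_row_sum[OF assms] by simp
qed

lemma marginal_path_measure_0:
  fixes T :: "'a::finite \<Rightarrow> 'a \<Rightarrow> real"
  assumes "\<forall>x. (\<Sum>y\<in>UNIV. T x y) = 1"
  shows "marginal n (path_measure a T n) 0 x = a x"
proof -
  have "marginal n (path_measure a T n) 0 x
      = (\<Sum>xs\<in>paths n. path_measure (\<lambda>z. if z = x then a z else 0) T n xs)"
    unfolding marginal_def path_measure_def by (intro sum.cong refl) simp
  also have "\<dots> = a x"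
    using sum_path_measure_stochastic[OF assms] by simp
  finally show ?thesis .
qed

lemma bridge_feasible_stationary_markov:
  fixes T :: "'a::finite \<Rightarrow> 'a \<Rightarrow> real"
  assumes nu: "is_prob_on UNIV nu" and T_nonneg: "\<forall>x y. T x y \<ge> 0"
    and stochastic: "\<forall>x. (\<Sum>y\<in>UNIV. T x y) = 1"
    and invariant: "\<forall>y. (\<Sum>x\<in>UNIV. nu x * T x y) = nu y"
  shows "bridge_feasible n nu nu (path_measure nu T n)"
proof -
  have "\<forall>xs\<in>paths n. path_measure nu T n xs \<ge> 0"
    using nu T_nonneg by (simp add: is_prob_on_def path_measure_nonneg)
  moreover have "(\<Sum>xs\<in>paths n. path_measure nu T n xs) = 1"
    using sum_path_measure_stochastic[OF stochastic] nu by (simp add: is_prob_on_def)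
  ultimately show ?thesis
    using marginal_path_measure_0[OF stochastic] matpow_invariant[OF invariant]
    by (simp add: bridge_feasible_def is_prob_on_def marginal_path_measure)
qed

lemma entropy_term_ge:
  fixes p q :: real
  assumes "p \<ge> 0" "q \<ge> 0" "p \<noteq> 0 \<longrightarrow> q \<noteq> 0"
  shows "(if p = 0 then 0 else p * ln (p / q)) \<ge> p - q"
    and "(if p = 0 then 0 else p * ln (p / q)) = p - q \<Longrightarrow> p = q"
proof -
  let ?t = "if p = 0 then 0 else p * ln (p / q)"
  have "?t \<ge> p - q \<and> (?t = p - q \<longrightarrow> p = q)"
  proof (cases "p = 0")
    case False
    then have p: "p > 0" and q: "q > 0"
      using assms by auto
    define d where "d = q / p - 1 - ln (q / p)"
    have t: "?t = p - q + p * d"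
      using p q by (simp add: d_def ln_div field_simps)
    have "d \<ge> 0"
      using p q ln_le_minus_one[of "q / p"] by (simp add: d_def)
    then have "?t \<ge> p - q"
      using p t by simp
    moreover have "p = q" if "?t = p - q"
    proof -
      have "d = 0"
        using that t p by simp
      then have "q / p = 1"
        using p q by (intro ln_eq_minus_one) (simp_all add: d_def)
      then show ?thesis
        using p by simp
    qed
    ultimately show ?thesis
      by blast
  qed (use assms in simp)
  then show "?t \<ge> p - q" and "?t = p - q \<Longrightarrow> p = q"
    by auto
qed

lemma gibbs_inequality:
  assumes "finite S" and P: "is_prob_on S P" and Q: "is_prob_on S Q"
  shows "0 \<le> rel_entropy S P Q"
    and "rel_entropy S P Q = 0 \<longleftrightarrow> (\<forall>x\<in>S. P x = Q x)"
proof -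
  define t where "t x = (if P x = 0 then 0 else P x * ln (P x / Q x))" for x
  have "(\<Sum>x\<in>S. P x - Q x) = 0"
    using P Q by (simp add: is_prob_on_def sum_subtractf)
  then have sum_t: "(\<Sum>x\<in>S. t x) = (\<Sum>x\<in>S. t x - (P x - Q x))"
    by (simp add: sum_subtractf)
  show "0 \<le> rel_entropy S P Q"
  proof (cases "\<forall>x\<in>S. P x \<noteq> 0 \<longrightarrow> Q x \<noteq> 0")
    case True
    then have "(\<Sum>x\<in>S. t x - (P x - Q x)) \<ge> 0"
      using P Q entropy_term_ge(1) by (auto simp: is_prob_on_def t_def intro!: sum_nonneg)
    then show ?thesis
      using True sum_t by (simp add: rel_entropy_def t_def)
  qed (auto simp: rel_entropy_def)
  show "rel_entropy S P Q = 0 \<longleftrightarrow> (\<forall>x\<in>S. P x = Q x)"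
  proof
    assume D0: "rel_entropy S P Q = 0"
    then have ac: "\<forall>x\<in>S. P x \<noteq> 0 \<longrightarrow> Q x \<noteq> 0"
      by (auto simp: rel_entropy_def split: if_splits)
    have ge: "\<forall>x\<in>S. t x - (P x - Q x) \<ge> 0"
      using P Q ac entropy_term_ge(1) by (auto simp: is_prob_on_def t_def)
    have "(\<Sum>x\<in>S. t x - (P x - Q x)) = 0"
      using D0 ac sum_t by (simp add: rel_entropy_def t_def)
    then have t_eq: "\<forall>x\<in>S. t x = P x - Q x"
      using ge sum_nonneg_eq_0_iff[OF \<open>finite S\<close>, of "\<lambda>x. t x - (P x - Q x)"] by auto
    show "\<forall>x\<in>S. P x = Q x"
    proof
      fix x assume "x \<in> S"
      then show "P x = Q x"
        using P Q ac t_eq entropy_term_ge(2)[of "P x" "Q x"] by (simp add: is_prob_on_def t_def)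
    qed
  next
    assume PQ: "\<forall>x\<in>S. P x = Q x"
    have "\<forall>x\<in>S. t x = 0"
      using PQ by (simp add: t_def)
    then have "(\<Sum>x\<in>S. t x) = 0"
      by (rule sum.neutral)
    moreover have "\<forall>x\<in>S. P x \<noteq> 0 \<longrightarrow> Q x \<noteq> 0"
      using PQ by simp
    ultimately show "rel_entropy S P Q = 0"
      unfolding rel_entropy_def t_def by simp
  qed
qed

lemma rel_entropy_change_reference:
  assumes P: "\<forall>x\<in>S. P x \<ge> 0" and R: "\<forall>x\<in>S. R x \<ge> 0"
    and c: "\<forall>x\<in>S. c x > 0" and Q: "\<forall>x\<in>S. Q x = R x * c x"
  shows "rel_entropy S P R = rel_entropy S P Q + ereal (\<Sum>x\<in>S. P x * ln (c x))"
proof (cases "\<forall>x\<in>S. P x \<noteq> 0 \<longrightarrow> R x \<noteq> 0")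
  case True
  have "(if P x = 0 then 0 else P x * ln (P x / R x))
      = (if P x = 0 then 0 else P x * ln (P x / Q x)) + P x * ln (c x)" if "x \<in> S" for x
  proof (cases "P x = 0")
    case False
    then have pq: "P x / Q x > 0"
      using that P R Q c True by (auto intro!: divide_pos_pos mult_pos_pos simp: less_le)
    have ratio: "P x / R x = P x / Q x * c x"
      using that Q c[rule_format, OF that] by simp
    have "ln (P x / R x) = ln (P x / Q x) + ln (c x)"
      unfolding ratio using pq c that by (intro ln_mult_pos) auto
    then show ?thesis
      using False by (simp add: distrib_left)
  qed simp
  moreover have "\<forall>x\<in>S. P x \<noteq> 0 \<longrightarrow> Q x \<noteq> 0"
    using True Q c by auto
  ultimately show ?thesis
    using True by (simp add: rel_entropy_def sum.distrib)
next
  case False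
  then have "\<not> (\<forall>x\<in>S. P x \<noteq> 0 \<longrightarrow> Q x \<noteq> 0)"
    using Q by auto
  then show ?thesis
    using False by (simp add: rel_entropy_def)
qed

lemma rel_entropy_minimal_by_density:
  assumes "finite S" and P: "is_prob_on S P" and Q: "is_prob_on S Q"
    and R: "\<forall>x\<in>S. R x \<ge> 0" and c: "\<forall>x\<in>S. c x > 0" and QRc: "\<forall>x\<in>S. Q x = R x * c x"
    and same_mean: "(\<Sum>x\<in>S. P x * ln (c x)) = (\<Sum>x\<in>S. Q x * ln (c x))"
  shows "rel_entropy S Q R \<le> rel_entropy S P R"
    and "rel_entropy S P R = rel_entropy S Q R \<Longrightarrow> \<forall>x\<in>S. P x = Q x"
proof -
  define K where "K = (\<Sum>x\<in>S. Q x * ln (c x))"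
  have Q_nonneg: "\<forall>x\<in>S. Q x \<ge> 0" and P_nonneg: "\<forall>x\<in>S. P x \<ge> 0"
    using P Q by (simp_all add: is_prob_on_def)
  have DQ: "rel_entropy S Q R = ereal K"
    using rel_entropy_change_reference[OF Q_nonneg R c QRc] gibbs_inequality(2)[OF \<open>finite S\<close> Q Q]
    by (simp add: K_def)
  have DP: "rel_entropy S P R = rel_entropy S P Q + ereal K"
    using rel_entropy_change_reference[OF P_nonneg R c QRc] same_mean by (simp add: K_def)
  show "rel_entropy S Q R \<le> rel_entropy S P R"
    using gibbs_inequality(1)[OF \<open>finite S\<close> P Q] DQ DP by (simp add: add_increasing)
  assume "rel_entropy S P R = rel_entropy S Q R"
  then have "rel_entropy S P Q = 0"
    using DQ DP by (cases "rel_entropy S P Q") simp_all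
  then show "\<forall>x\<in>S. P x = Q x"
    using gibbs_inequality(2)[OF \<open>finite S\<close> P Q] by simp
qed

lemma sum_paths_marginal:
  fixes P :: "'a::finite list \<Rightarrow> real"
  shows "(\<Sum>xs\<in>paths N. P xs * f (xs ! t)) = (\<Sum>x\<in>UNIV. marginal N P t x * f x)"
proof -
  have "(\<Sum>x\<in>UNIV. marginal N P t x * f x)
      = (\<Sum>x\<in>UNIV. \<Sum>xs\<in>paths N. if xs ! t = x then P xs * f x else 0)"
    unfolding marginal_def sum_distrib_right by (intro sum.cong refl) simp
  also have "\<dots> = (\<Sum>xs\<in>paths N. \<Sum>x\<in>UNIV. if xs ! t = x then P xs * f x else 0)"
    by (rule sum.swap)
  also have "\<dots> = (\<Sum>xs\<in>paths N. P xs * f (xs ! t))"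
    by simp
  finally show ?thesis ..
qed

lemma bridge_minimal_by_endpoint_density:
  fixes P Q R :: "'a::finite list \<Rightarrow> real"
  assumes Q: "bridge_feasible N nu0 nu1 Q" and P: "bridge_feasible N nu0 nu1 P"
    and R: "\<forall>xs. R xs \<ge> 0" and f: "\<forall>x. f x > 0" and g: "\<forall>x. g x > 0"
    and QRfg: "\<forall>xs. Q xs = R xs * (f (xs ! 0) * g (xs ! N))"
  shows "rel_entropy (paths N) Q R \<le> rel_entropy (paths N) P R"
    and "rel_entropy (paths N) P R = rel_entropy (paths N) Q R \<Longrightarrow> \<forall>xs\<in>paths N. P xs = Q xs"
proof -
  have log_mean: "(\<Sum>xs\<in>paths N. P' xs * ln (f (xs ! 0) * g (xs ! N)))
      = (\<Sum>x\<in>UNIV. nu0 x * ln (f x)) + (\<Sum>x\<in>UNIV. nu1 x * ln (g x))"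
    if "bridge_feasible N nu0 nu1 P'" for P'
  proof -
    have "(\<Sum>xs\<in>paths N. P' xs * ln (f (xs ! 0) * g (xs ! N)))
        = (\<Sum>xs\<in>paths N. P' xs * ln (f (xs ! 0))) + (\<Sum>xs\<in>paths N. P' xs * ln (g (xs ! N)))"
      using f g by (simp add: ln_mult_pos distrib_left sum.distrib)
    then show ?thesis
      using that sum_paths_marginal[where P = P' and f = "\<lambda>x. ln (f x)" and t = 0]
        sum_paths_marginal[where P = P' and f = "\<lambda>x. ln (g x)" and t = N]
      by (simp add: bridge_feasible_def mult.commute)
  qed
  have prob: "is_prob_on (paths N) P" "is_prob_on (paths N) Q"
    using P Q by (simp_all add: bridge_feasible_def)
  have density: "\<forall>xs\<in>paths N. R xs \<ge> 0" "\<forall>xs\<in>paths N. f (xs ! 0) * g (xs ! N) > 0"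
    "\<forall>xs\<in>paths N. Q xs = R xs * (f (xs ! 0) * g (xs ! N))"
    using R f g QRfg by simp_all
  have "(\<Sum>xs\<in>paths N. P xs * ln (f (xs ! 0) * g (xs ! N)))
      = (\<Sum>xs\<in>paths N. Q xs * ln (f (xs ! 0) * g (xs ! N)))"
    unfolding log_mean[OF P] log_mean[OF Q] ..
  from rel_entropy_minimal_by_density[OF finite_paths prob density this]
  show "rel_entropy (paths N) Q R \<le> rel_entropy (paths N) P R"
    and "rel_entropy (paths N) P R = rel_entropy (paths N) Q R \<Longrightarrow> \<forall>xs\<in>paths N. P xs = Q xs"
    by blast+
qed

lemma prod_telescope:
  fixes t p :: "nat \<Rightarrow> real"
  assumes "\<forall>k. p k \<noteq> 0" and "lam \<noteq> 0"
  shows "(\<Prod>k<n. t k * p (Suc k) / (lam * p k)) = (\<Prod>k<n. t k) * p n / (lam ^ n * p 0)"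
proof (induction n)
  case (Suc n)
  have "p n \<noteq> 0" "p (Suc n) \<noteq> 0" "p 0 \<noteq> 0"
    using assms(1) by auto
  with Suc.IH assms(2) show ?case
    by (simp add: field_simps)
qed (use assms in simp)

lemma path_measure_h_transform:
  assumes "\<forall>x. h x \<noteq> 0" and "lam \<noteq> 0"
  shows "path_measure a (\<lambda>x y. T x y * h y / (lam * h x)) n xs
       = path_measure a T n xs * h (xs ! n) / (lam ^ n * h (xs ! 0))"
  using prod_telescope[of "\<lambda>k. h (xs ! k)" lam "\<lambda>k. T (xs ! k) (xs ! Suc k)" n] assms
  by (simp add: path_measure_def)

lemma h_transform_stochastic:
  fixes T :: "'a::finite \<Rightarrow> 'a \<Rightarrow> real"
  assumes "\<forall>x. (\<Sum>y\<in>UNIV. T x y * h y) = lam * h x" and "h x \<noteq> 0" and "lam \<noteq> 0"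
  shows "(\<Sum>y\<in>UNIV. T x y * h y / (lam * h x)) = 1"
proof -
  have "(\<Sum>y\<in>UNIV. T x y * h y / (lam * h x)) = (\<Sum>y\<in>UNIV. T x y * h y) / (lam * h x)"
    by (rule sum_divide_distrib[symmetric])
  then show ?thesis
    using assms by simp
qed

lemma h_transform_invariant:
  fixes T :: "'a::finite \<Rightarrow> 'a \<Rightarrow> real"
  assumes "\<forall>y. (\<Sum>x\<in>UNIV. T x y * g x) = lam * g y" and "\<forall>x. h x \<noteq> 0" and "lam \<noteq> 0"
  shows "(\<Sum>x\<in>UNIV. h x * g x * (T x y * h y / (lam * h x))) = h y * g y"
proof -
  have "(\<Sum>x\<in>UNIV. h x * g x * (T x y * h y / (lam * h x))) = (\<Sum>x\<in>UNIV. T x y * g x * (h y / lam))"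
    using assms(2) by (intro sum.cong refl) (simp add: field_simps)
  also have "\<dots> = (\<Sum>x\<in>UNIV. T x y * g x) * (h y / lam)"
    by (rule sum_distrib_right[symmetric])
  finally show ?thesis
    using assms(1,3) by simp
qed

theorem proposition3p2:
  fixes M :: "'a::finite \<Rightarrow> 'a \<Rightarrow> real"
    and N :: nat and lam :: real
    and phi phihat mu0 :: "'a \<Rightarrow> real"
  assumes N: "N \<ge> 1"
    and M_nonneg: "\<forall>x y. M x y \<ge> 0"
    and M_prim: "\<forall>x y. matpow M N x y > 0"
    and lam: "lam = spectral_radius M" and lam_pos: "lam > 0"
    and phi_pos: "\<forall>x. phi x > 0" and phihat_pos: "\<forall>x. phihat x > 0"
    and phi_eig: "\<forall>x. (\<Sum>y\<in>UNIV. M x y * phi y) = lam * phi x"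
    and phihat_eig: "\<forall>y. (\<Sum>x\<in>UNIV. M x y * phihat x) = lam * phihat y"
    and norm: "(\<Sum>x\<in>UNIV. phi x * phihat x) = 1"
    and mu0_pos: "\<forall>x. mu0 x > 0"
  defines "nubar \<equiv> (\<lambda>x. phi x * phihat x)"
    and "Pibar \<equiv> (\<lambda>x y. M x y * phi y / (lam * phi x))"
  shows "bridge_feasible N nubar nubar (path_measure nubar Pibar N)
     \<and> (\<forall>P. bridge_feasible N nubar nubar P \<longrightarrow>
           rel_entropy (paths N) (path_measure nubar Pibar N) (path_measure mu0 M N)
             \<le> rel_entropy (paths N) P (path_measure mu0 M N))
     \<and> (\<forall>P. bridge_feasible N nubar nubar P \<and>
           rel_entropy (paths N) P (path_measure mu0 M N)
             = rel_entropy (paths N) (path_measure nubar Pibar N) (path_measure mu0 M N)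
           \<longrightarrow> (\<forall>xs\<in>paths N. P xs = path_measure nubar Pibar N xs))
     \<and> (\<forall>y. (\<Sum>x\<in>UNIV. Pibar x y * nubar x) = nubar y)"
proof -
  \<comment> \<open>Only the eigen-equations with positive eigenvectors are used: \<open>N \<ge> 1\<close>, primitivity and
      \<open>lam = spectral_radius M\<close> merely guarantee (Perron--Frobenius) that such data exist.\<close>
  have lam_ne: "lam \<noteq> 0" and phi_ne: "\<forall>x. phi x \<noteq> 0"
    using lam_pos phi_pos by (auto simp: less_le)
  have Pibar_nonneg: "\<forall>x y. Pibar x y \<ge> 0"
    using M_nonneg phi_pos lam_pos by (simp add: Pibar_def less_imp_le)
  have stochastic: "\<forall>x. (\<Sum>y\<in>UNIV. Pibar x y) = 1"
    using h_transform_stochastic[OF phi_eig _ lam_ne] phi_ne by (simp add: Pibar_def)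
  have invariant: "\<forall>y. (\<Sum>x\<in>UNIV. nubar x * Pibar x y) = nubar y"
    using h_transform_invariant[OF phihat_eig phi_ne lam_ne] by (simp add: nubar_def Pibar_def)
  have "is_prob_on UNIV nubar"
    using norm phi_pos phihat_pos by (simp add: is_prob_on_def nubar_def less_imp_le)
  then have feasible: "bridge_feasible N nubar nubar (path_measure nubar Pibar N)"
    using Pibar_nonneg stochastic invariant by (rule bridge_feasible_stationary_markov)
  have density: "\<forall>xs. path_measure nubar Pibar N xs
      = path_measure mu0 M N xs * (phihat (xs ! 0) / (lam ^ N * mu0 (xs ! 0)) * phi (xs ! N))"
  proof
    fix xs :: "'a list"
    show "path_measure nubar Pibar N xs
      = path_measure mu0 M N xs * (phihat (xs ! 0) / (lam ^ N * mu0 (xs ! 0)) * phi (xs ! N))"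
      using path_measure_h_transform[OF phi_ne lam_ne, of nubar M N xs] phi_ne
        mu0_pos[rule_format, of "xs ! 0"]
      by (simp add: Pibar_def nubar_def path_measure_def field_simps)
  qed
  have R_nonneg: "\<forall>xs. path_measure mu0 M N xs \<ge> 0"
    using mu0_pos M_nonneg by (simp add: path_measure_nonneg less_imp_le)
  have "\<forall>x. phihat x / (lam ^ N * mu0 x) > 0"
    using phihat_pos mu0_pos lam_pos by simp
  note minimal = bridge_minimal_by_endpoint_density[OF feasible _ R_nonneg this phi_pos density]
  have "\<forall>y. (\<Sum>x\<in>UNIV. Pibar x y * nubar x) = nubar y"
    using invariant by (simp add: mult.commute)
  with feasible minimal show ?thesis
    by blast
qed

end
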